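(* Let $T$ be a decomposition tree of a distance-hereditary graph $G$, and let $v$ be an internal node of $T$ labeled $\oplus$ with left child $v_l$ and right child $v_r$, such that property (P) holds at $v_l$ and at $v_r$. Assume $\hat\alpha(v_r)>\hat\beta(v_l)$. Then $\hat\beta(v)=0$.
   Context: All graphs are finite, simple, undirected. For a graph $H$ and $S\subseteq V(H)$, $N_H[S]$ is $S$ together with all vertices adjacent to a vertex of $S$, and $H[S]$ is the induced subgraph. Graphs carry a "twin set": a single-vertex graph on $x$ has twin set $\{x\}$. For vertex-disjoint graphs $G_l,G_r$ with twin sets $TS(G_l),TS(G_r)$: the true twin operation $G_l\otimes G_r$ has vertex set $V(G_l)\cup V(G_r)$, edge set $E(G_l)\cup E(G_r)\cup\{uw: u\in TS(G_l), w\in TS(G_r)\}$ and twin set $TS(G_l)\cup TS(G_r)$; the false twin operation $G_l\odot G_r$ has vertex set $V(G_l)\cup V(G_r)$, edge set $E(G_l)\cup E(G_r)$, twin set $TS(G_l)\cup TS(G_r)$; the attachment operation $G_l\oplus G_r$ has the same vertex and edge sets as $G_l\otimes G_r$ and twin set $TS(G_l)$. A decomposition tree $T$ of $G$ is a rooted binary tree whose leaves are in bijection with $V(G)$, each internal node having a left and a right child and a label in $\{\otimes,\odot,\oplus\}$; for each node $v$ define $\hat G(v)$ and $\hat{TS}(v)$ recursively: for a leaf $x$, the single-vertex graph on $x$ with twin set $\{x\}$; for an internal node $v$ with label $\circ$ and children $v_l,v_r$, $\hat G(v)=\hat G(v_l)\circ\hat G(v_r)$ with the corresponding twin set; one requires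 $\hat G(\text{root})=G$. Then $\hat G(v)$ is the subgraph of $G$ induced by the set $\hat V(v)$ of leaves below $v$. For a node $u$ and $0\le k\le|\hat{TS}(u)|$, call $S\subseteq\hat V(u)$ $k$-feasible if $\hat V(u)\setminus\hat{TS}(u)\subseteq N_{\hat G(u)}[S]$ and there is $X\subseteq S\cap\hat{TS}(u)$ with $|X|=k$ such that $\hat G(u)[S\setminus X]$ has a perfect matching. $\hat\gamma_k(u)$ is the minimum size of a $k$-feasible set. $\hat{min}(u)=\min\{\hat\gamma_k(u):0\le k\le|\hat{TS}(u)|\}$, and $\hat\alpha(u)$, $\hat\beta(u)$ are the smallest and the largest $k$ with $\hat\gamma_k(u)=\hat{min}(u)$. Property (P) holds at $u$ if for every $0\le k\le|\hat{TS}(u)|$: $\hat\gamma_k(u)=\hat{min}(u)+\hat\alpha(u)-k$ when $k\le\hat\alpha(u)$; $\hat\gamma_k(u)=\hat{min}(u)+k-\hat\beta(u)$ when $k\ge\hat\beta(u)$; $\hat\gamma_k(u)=\hat{min}(u)$ when $\hat\alpha(u)<k<\hat\beta(u)$ and $k-\hat\alpha(u)$ is even; and $\hat\gamma_k(u)=\hat{min}(u)+1$ otherwise. *)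

theory Defs
  imports "HOL-Library.Extended_Nat"
begin

(* Graphs: a vertex set V and a set E of edges, each edge a 2-element set {u,w}. *)

datatype dlabel = TrueTwin | FalseTwin | Attach

datatype 'a dtree = Leaf 'a | Node dlabel "'a dtree" "'a dtree"

fun hV :: "'a dtree \<Rightarrow> 'a set" where
  "hV (Leaf x) = {x}"
| "hV (Node _ l r) = hV l \<union> hV r"

fun hTS :: "'a dtree \<Rightarrow> 'a set" where
  "hTS (Leaf x) = {x}"
| "hTS (Node TrueTwin l r) = hTS l \<union> hTS r"
| "hTS (Node FalseTwin l r) = hTS l \<union> hTS r"
| "hTS (Node Attach l r) = hTS l"

fun hE :: "'a dtree \<Rightarrow> 'a set set" where
  "hE (Leaf x) = {}"
| "hE (Node TrueTwin l r) = hE l \<union> hE r \<union> {{u, w} | u w. u \<in> hTS l \<and> w \<in> hTS r}"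
| "hE (Node FalseTwin l r) = hE l \<union> hE r"
| "hE (Node Attach l r) = hE l \<union> hE r \<union> {{u, w} | u w. u \<in> hTS l \<and> w \<in> hTS r}"

(* leaves of left and right subtrees are disjoint at every node: leaves in bijection with vertices *)
fun wf_dtree :: "'a dtree \<Rightarrow> bool" where
  "wf_dtree (Leaf x) = True"
| "wf_dtree (Node _ l r) = (wf_dtree l \<and> wf_dtree r \<and> hV l \<inter> hV r = {})"

fun subtrees :: "'a dtree \<Rightarrow> 'a dtree set" where
  "subtrees (Leaf x) = {Leaf x}"
| "subtrees (Node c l r) = insert (Node c l r) (subtrees l \<union> subtrees r)"

definition decomp_tree :: "'a dtree \<Rightarrow> 'a set \<Rightarrow> 'a set set \<Rightarrow> bool" where
  "decomp_tree T V E \<longleftrightarrow> wf_dtree T \<and> hV T = V \<and> hE T = E"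

definition is_path_len :: "'a set \<Rightarrow> 'a set set \<Rightarrow> 'a \<Rightarrow> 'a \<Rightarrow> nat \<Rightarrow> bool" where
  "is_path_len S E u w n \<longleftrightarrow> (\<exists>xs. length xs = Suc n \<and> hd xs = u \<and> last xs = w \<and> set xs \<subseteq> S
      \<and> (\<forall>i < n. {xs ! i, xs ! Suc i} \<in> E))"

definition dist_in :: "'a set \<Rightarrow> 'a set set \<Rightarrow> 'a \<Rightarrow> 'a \<Rightarrow> nat" where
  "dist_in S E u w = (LEAST n. is_path_len S E u w n)"

definition connected_in :: "'a set \<Rightarrow> 'a set set \<Rightarrow> bool" where
  "connected_in S E \<longleftrightarrow> (\<forall>u\<in>S. \<forall>w\<in>S. \<exists>n. is_path_len S E u w n)"

definition distance_hereditary :: "'a set \<Rightarrow> 'a set set \<Rightarrow> bool" where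
  "distance_hereditary V E \<longleftrightarrow> (\<forall>S \<subseteq> V. connected_in S E \<longrightarrow>
      (\<forall>u\<in>S. \<forall>w\<in>S. dist_in S E u w = dist_in V E u w))"

definition cnbhd :: "'a dtree \<Rightarrow> 'a set \<Rightarrow> 'a set" where
  "cnbhd v S = S \<union> {w \<in> hV v. \<exists>s\<in>S. {s, w} \<in> hE v}"

definition has_pm :: "'a dtree \<Rightarrow> 'a set \<Rightarrow> bool" where
  "has_pm v W \<longleftrightarrow> (\<exists>M. M \<subseteq> hE v \<and> (\<forall>e\<in>M. e \<subseteq> W)
      \<and> (\<forall>e\<in>M. \<forall>e'\<in>M. e \<noteq> e' \<longrightarrow> e \<inter> e' = {}) \<and> \<Union>M = W)"

definition k_feasible :: "'a dtree \<Rightarrow> nat \<Rightarrow> 'a set \<Rightarrow> bool" where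
  "k_feasible v k S \<longleftrightarrow> S \<subseteq> hV v \<and> hV v - hTS v \<subseteq> cnbhd v S
      \<and> (\<exists>X. X \<subseteq> S \<inter> hTS v \<and> card X = k \<and> has_pm v (S - X))"

(* minimum size of a k-feasible set (\<infinity> if none exists) *)
definition hgamma :: "nat \<Rightarrow> 'a dtree \<Rightarrow> enat" where
  "hgamma k v = (INF S \<in> {S. k_feasible v k S}. enat (card S))"

definition hmin :: "'a dtree \<Rightarrow> enat" where
  "hmin v = Min ((\<lambda>k. hgamma k v) ` {0..card (hTS v)})"

definition halpha :: "'a dtree \<Rightarrow> nat" where
  "halpha v = Min {k. k \<le> card (hTS v) \<and> hgamma k v = hmin v}"

definition hbeta :: "'a dtree \<Rightarrow> nat" where
  "hbeta v = Max {k. k \<le> card (hTS v) \<and> hgamma k v = hmin v}"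

definition prop_P :: "'a dtree \<Rightarrow> bool" where
  "prop_P v \<longleftrightarrow> (\<forall>k \<le> card (hTS v).
      (k \<le> halpha v \<longrightarrow> hgamma k v = hmin v + enat (halpha v - k))
    \<and> (k \<ge> hbeta v \<longrightarrow> hgamma k v = hmin v + enat (k - hbeta v))
    \<and> (halpha v < k \<and> k < hbeta v \<and> even (k - halpha v) \<longrightarrow> hgamma k v = hmin v)
    \<and> (\<not> (k \<le> halpha v) \<and> \<not> (k \<ge> hbeta v) \<and> \<not> (halpha v < k \<and> k < hbeta v \<and> even (k - halpha v))
         \<longrightarrow> hgamma k v = hmin v + 1))"

end

theory Submission
  imports Defs
begin

(*
  A k-feasible set S of v
  restricts to a (k + m)-feasible set of v_l and an m-feasible set of v_r, where m counts the
  matching edges between the two twin sets; conversely, for m >= 1, m-feasible sets of the two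
  children combine into a 0-feasible set of v: their unmatched twins are matched across, and any
  of the twins of v_l dominates all twins of v_r. Hence
    gamma_0(v) <= gamma_m(v_l) + gamma_m(v_r)  for m >= 1,   and
    gamma_k(v) >= gamma_(k+m)(v_l) + gamma_m(v_r)  for some m.
  By (P), gamma_j(v_l) increases with slope 1 for j >= beta(v_l) and gamma_j(v_r) decreases with
  slope 1 for j <= alpha(v_r). As alpha(v_r) > beta(v_l), for k >= 1 one of m, k + m, alpha(v_r)
  is an index j >= 1 with gamma_j(v_l) + gamma_j(v_r) < gamma_(k+m)(v_l) + gamma_m(v_r).
  So gamma_0(v) < gamma_k(v) for every k >= 1, that is, beta(v) = 0.
*)

section \<open>Sets and matchings\<close>

lemma obtain_subsets_same_card:
  assumes "finite P" "finite Q"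
  obtains P' Q' where "P' \<subseteq> P" "Q' \<subseteq> Q" "card P' = card Q'" "P' = P \<or> Q' = Q"
proof (cases "card P \<le> card Q")
  case True
  then obtain Q' where "Q' \<subseteq> Q" "card Q' = card P"
    by (rule obtain_subset_with_card_n)
  then show ?thesis using that[of P Q'] by simp
next
  case False
  then obtain P' where "P' \<subseteq> P" "card P' = card Q"
    by (metis nat_le_linear obtain_subset_with_card_n)
  then show ?thesis using that[of P' Q] by simp
qed

lemma pairwise_disjnt_Union_Int:
  assumes "pairwise disjnt M" "A \<subseteq> M" "B \<subseteq> M" "A \<inter> B = {}"
  shows "\<Union>A \<inter> \<Union>B = {}"
proof -
  have "disjnt a b" if "a \<in> A" "b \<in> B" for a b
    using assms that unfolding pairwise_def by (metis disjoint_iff subsetD)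
  then show ?thesis
    unfolding disjnt_def by blast
qed

lemma card_Union_Int_eq_card:
  assumes "finite M" "pairwise disjnt M" "\<And>e. e \<in> M \<Longrightarrow> card (e \<inter> W) = 1"
  shows "card (\<Union>M \<inter> W) = card M"
proof -
  have "\<Union>M \<inter> W = (\<Union>e\<in>M. e \<inter> W)" by blast
  also have "card \<dots> = (\<Sum>e\<in>M. card (e \<inter> W))"
    using assms by (intro card_UN_disjoint) (auto simp: pairwise_def disjnt_def card_ge_0_finite)
  also have "\<dots> = card M"
    using assms by simp
  finally show ?thesis .
qed

definition perfect_matching :: "'a set set \<Rightarrow> 'a set set \<Rightarrow> 'a set \<Rightarrow> bool" where
  "perfect_matching E M W \<longleftrightarrow> M \<subseteq> E \<and> pairwise disjnt M \<and> \<Union>M = W"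

lemma perfect_matching_Un:
  assumes M: "perfect_matching E M W" and M': "perfect_matching E M' W'" and "disjnt W W'"
  shows "perfect_matching E (M \<union> M') (W \<union> W')"
proof -
  have "disjnt e e'" if "e \<in> M" "e' \<in> M'" for e e'
    using that M M' \<open>disjnt W W'\<close> unfolding perfect_matching_def
    by (metis Union_upper disjnt_subset1 disjnt_subset2)
  then have "pairwise disjnt (M \<union> M')"
    using M M' unfolding perfect_matching_def pairwise_def by (auto intro: disjnt_sym)
  then show ?thesis
    using M M' unfolding perfect_matching_def by auto
qed

lemma perfect_matching_bij_betw:
  assumes h: "bij_betw h A B" and "disjnt A B" and "\<And>x. x \<in> A \<Longrightarrow> {x, h x} \<in> E"
  shows "perfect_matching E ((\<lambda>x. {x, h x}) ` A) (A \<union> B)"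
  unfolding perfect_matching_def
proof (intro conjI)
  have "h x \<in> B" "h x \<noteq> h y" if "x \<in> A" "y \<in> A" "x \<noteq> y" for x y
    using h that by (auto simp: bij_betw_def inj_on_def)
  then show "pairwise disjnt ((\<lambda>x. {x, h x}) ` A)"
    using \<open>disjnt A B\<close> by (intro pairwise_imageI) (auto simp: disjnt_def)
  show "\<Union>((\<lambda>x. {x, h x}) ` A) = A \<union> B"
    using bij_betw_imp_surj_on[OF h] by blast
qed (use assms in blast)

section \<open>Decomposition trees\<close>

lemma finite_hV: "finite (hV u)"
  by (induction u) auto

lemma hTS_subset_hV: "hTS u \<subseteq> hV u"
  by (induction u rule: hTS.induct) auto

lemma finite_hTS: "finite (hTS u)"
  using finite_hV hTS_subset_hV by (rule finite_subset[rotated])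

lemma hTS_nonempty: "hTS u \<noteq> {}"
  by (induction u rule: hTS.induct) auto

lemma card_hTS_pos: "0 < card (hTS u)"
  by (simp add: card_gt_0_iff finite_hTS hTS_nonempty)

definition cross_edges :: "'a dtree \<Rightarrow> 'a dtree \<Rightarrow> 'a set set" where
  "cross_edges l r = {{u, w} | u w. u \<in> hTS l \<and> w \<in> hTS r}"

lemma hE_Attach: "hE (Node Attach l r) = hE l \<union> hE r \<union> cross_edges l r"
  unfolding cross_edges_def by simp

lemma hE_Node_subset: "hE (Node c l r) \<subseteq> hE l \<union> hE r \<union> cross_edges l r"
  unfolding cross_edges_def by (cases c) auto

lemma cross_edges_subset_Pow: "cross_edges l r \<subseteq> Pow (hV l \<union> hV r)"
  unfolding cross_edges_def using hTS_subset_hV[of l] hTS_subset_hV[of r] by blast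

lemma hE_subset_Pow_hV: "hE u \<subseteq> Pow (hV u)"
proof (induction u)
  case (Node c l r)
  have "hE l \<union> hE r \<subseteq> Pow (hV l \<union> hV r)"
    using Node.IH by blast
  then have "hE l \<union> hE r \<union> cross_edges l r \<subseteq> Pow (hV (Node c l r))"
    using cross_edges_subset_Pow[of l r] by simp
  then show ?case
    using hE_Node_subset[of c l r] by (rule order_trans[rotated])
qed simp

lemma hE_children_subset: "hE l \<subseteq> hE (Node c l r)" "hE r \<subseteq> hE (Node c l r)"
  by (cases c; auto)+

lemma wf_dtree_subtree: "u \<in> subtrees T \<Longrightarrow> wf_dtree T \<Longrightarrow> wf_dtree u"
  by (induction T) auto

lemma cross_edge_Int_hV:
  assumes "hV l \<inter> hV r = {}" "e \<in> cross_edges l r"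
  shows "e \<inter> hV l \<subseteq> hTS l" "card (e \<inter> hV l) = 1" "e \<inter> hV r \<subseteq> hTS r" "card (e \<inter> hV r) = 1"
proof -
  obtain u w where uw: "e = {u, w}" "u \<in> hTS l" "w \<in> hTS r"
    using assms(2) unfolding cross_edges_def by blast
  then have "e \<inter> hV l = {u}" "e \<inter> hV r = {w}"
    using assms(1) hTS_subset_hV[of l] hTS_subset_hV[of r] by auto
  then show "e \<inter> hV l \<subseteq> hTS l" "card (e \<inter> hV l) = 1" "e \<inter> hV r \<subseteq> hTS r" "card (e \<inter> hV r) = 1"
    using uw by simp_all
qed

lemma cross_edges_Int_hE:
  assumes D: "hV l \<inter> hV r = {}"
  shows "cross_edges l r \<inter> hE l = {}" "cross_edges l r \<inter> hE r = {}"
proof -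
  have "e \<notin> hE l" if e: "e \<in> cross_edges l r" for e
  proof
    assume "e \<in> hE l"
    then have "e \<inter> hV r = {}"
      using hE_subset_Pow_hV[of l] D by blast
    then show False
      using cross_edge_Int_hV(4)[OF D e] by simp
  qed
  moreover have "e \<notin> hE r" if e: "e \<in> cross_edges l r" for e
  proof
    assume "e \<in> hE r"
    then have "e \<inter> hV l = {}"
      using hE_subset_Pow_hV[of r] D by blast
    then show False
      using cross_edge_Int_hV(2)[OF D e] by simp
  qed
  ultimately show "cross_edges l r \<inter> hE l = {}" "cross_edges l r \<inter> hE r = {}"
    by blast+
qed

lemma subset_cnbhd: "S \<subseteq> cnbhd u S"
  unfolding cnbhd_def by blast

lemma cnbhd_mono: "hV u \<subseteq> hV u' \<Longrightarrow> hE u \<subseteq> hE u' \<Longrightarrow> A \<subseteq> B \<Longrightarrow> cnbhd u A \<subseteq> cnbhd u' B"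
  unfolding cnbhd_def by blast

lemma edge_Node_non_twin_left:
  assumes D: "hV l \<inter> hV r = {}" and x: "x \<in> hV l - hTS l" and "{s, x} \<in> hE (Node c l r)"
  shows "{s, x} \<in> hE l"
proof -
  have "{s, x} \<notin> hE r"
    using D x hE_subset_Pow_hV[of r] by blast
  moreover have "{s, x} \<notin> cross_edges l r"
    using cross_edge_Int_hV(1)[OF D] x by blast
  ultimately show ?thesis
    using assms(3) hE_Node_subset[of c l r] by blast
qed

lemma edge_Node_non_twin_right:
  assumes D: "hV l \<inter> hV r = {}" and x: "x \<in> hV r - hTS r" and "{s, x} \<in> hE (Node c l r)"
  shows "{s, x} \<in> hE r"
proof -
  have "{s, x} \<notin> hE l"
    using D x hE_subset_Pow_hV[of l] by blast
  moreover have "{s, x} \<notin> cross_edges l r"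
    using cross_edge_Int_hV(3)[OF D] x by blast
  ultimately show ?thesis
    using assms(3) hE_Node_subset[of c l r] by blast
qed

lemma cnbhd_Node_non_twin_left:
  assumes "hV l \<inter> hV r = {}" "x \<in> hV l - hTS l" "x \<in> cnbhd (Node c l r) S"
  shows "x \<in> cnbhd l (S \<inter> hV l)"
  using assms edge_Node_non_twin_left[OF assms(1,2)] hE_subset_Pow_hV[of l] unfolding cnbhd_def by blast

lemma cnbhd_Node_non_twin_right:
  assumes "hV l \<inter> hV r = {}" "x \<in> hV r - hTS r" "x \<in> cnbhd (Node c l r) S"
  shows "x \<in> cnbhd r (S \<inter> hV r)"
  using assms edge_Node_non_twin_right[OF assms(1,2)] hE_subset_Pow_hV[of r] unfolding cnbhd_def by blast

lemma hTS_right_subset_cnbhd_Attach: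
  assumes "t \<in> hTS l" "t \<in> S"
  shows "hTS r \<subseteq> cnbhd (Node Attach l r) S"
proof
  fix x assume x: "x \<in> hTS r"
  then have "{t, x} \<in> hE (Node Attach l r)"
    using assms(1) unfolding hE_Attach cross_edges_def by blast
  moreover have "x \<in> hV (Node Attach l r)"
    using x hTS_subset_hV[of r] by auto
  ultimately show "x \<in> cnbhd (Node Attach l r) S"
    unfolding cnbhd_def using assms(2) by blast
qed

lemma non_twins_Attach_subset_cnbhd:
  assumes "hTS r \<subseteq> cnbhd (Node Attach l r) S"
    and "hV l - hTS l \<subseteq> cnbhd l Sl" "hV r - hTS r \<subseteq> cnbhd r Sr" and "Sl \<subseteq> S" "Sr \<subseteq> S"
  shows "hV (Node Attach l r) - hTS (Node Attach l r) \<subseteq> cnbhd (Node Attach l r) S"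
proof -
  have "cnbhd l Sl \<subseteq> cnbhd (Node Attach l r) S" "cnbhd r Sr \<subseteq> cnbhd (Node Attach l r) S"
    using assms(4,5) by (intro cnbhd_mono hE_children_subset; auto)+
  then show ?thesis
    using assms(1-3) by auto
qed

lemma non_twins_children_subset_cnbhd:
  assumes D: "hV l \<inter> hV r = {}"
    and "hV (Node Attach l r) - hTS (Node Attach l r) \<subseteq> cnbhd (Node Attach l r) S"
  shows "hV l - hTS l \<subseteq> cnbhd l (S \<inter> hV l)" "hV r - hTS r \<subseteq> cnbhd r (S \<inter> hV r)"
proof -
  have "hV l - hTS l \<subseteq> cnbhd (Node Attach l r) S" "hV r - hTS r \<subseteq> cnbhd (Node Attach l r) S"
    using assms hTS_subset_hV[of l] by auto
  then show "hV l - hTS l \<subseteq> cnbhd l (S \<inter> hV l)" "hV r - hTS r \<subseteq> cnbhd r (S \<inter> hV r)"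
    using cnbhd_Node_non_twin_left[OF D] cnbhd_Node_non_twin_right[OF D] by blast+
qed

lemma has_pm_iff_perfect_matching: "has_pm u W \<longleftrightarrow> (\<exists>M. perfect_matching (hE u) M W)"
  unfolding has_pm_def perfect_matching_def pairwise_def disjnt_def
  by (intro ex_cong1) auto

lemma has_pm_empty: "has_pm u {}"
  unfolding has_pm_def by auto

lemma has_pm_Un:
  assumes "has_pm u W" "has_pm u W'" "disjnt W W'"
  shows "has_pm u (W \<union> W')"
proof -
  obtain M M' where "perfect_matching (hE u) M W" "perfect_matching (hE u) M' W'"
    using assms(1,2) unfolding has_pm_iff_perfect_matching by blast
  then show ?thesis
    unfolding has_pm_iff_perfect_matching using perfect_matching_Un assms(3) by blast
qed

lemma has_pm_mono:
  assumes "hE u \<subseteq> hE u'" "has_pm u W"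
  shows "has_pm u' W"
proof -
  obtain M where "perfect_matching (hE u) M W"
    using assms(2) has_pm_iff_perfect_matching by blast
  then have "perfect_matching (hE u') M W"
    using assms(1) unfolding perfect_matching_def by blast
  then show ?thesis
    using has_pm_iff_perfect_matching by blast
qed

lemma has_pm_subset_hV:
  assumes "has_pm u W"
  shows "W \<subseteq> hV u"
proof -
  obtain M where "M \<subseteq> hE u" "\<Union>M = W"
    using assms unfolding has_pm_def by blast
  then show ?thesis
    using hE_subset_Pow_hV[of u] by blast
qed

lemma has_pm_Attach_cross:
  assumes "A \<subseteq> hTS l" "B \<subseteq> hTS r" "disjnt A B" "card A = card B"
  shows "has_pm (Node Attach l r) (A \<union> B)"
proof -
  have "finite A" "finite B"
    using assms(1,2) finite_hTS finite_subset by blast+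
  then obtain h where h: "bij_betw h A B"
    using \<open>card A = card B\<close> finite_same_card_bij by blast
  then have "{x, h x} \<in> hE (Node Attach l r)" if "x \<in> A" for x
    using that assms(1,2) bij_betwE unfolding hE_Attach cross_edges_def by fastforce
  then show ?thesis
    unfolding has_pm_iff_perfect_matching using perfect_matching_bij_betw[OF h \<open>disjnt A B\<close>] by blast
qed

lemma has_pm_Attach:
  assumes D: "hV l \<inter> hV r = {}" and l: "has_pm l Wl" and r: "has_pm r Wr"
    and A: "A \<subseteq> hTS l - Wl" and B: "B \<subseteq> hTS r - Wr" and "card A = card B"
  shows "has_pm (Node Attach l r) (Wl \<union> Wr \<union> (A \<union> B))"
proof -
  let ?v = "Node Attach l r"
  have W: "Wl \<subseteq> hV l" "Wr \<subseteq> hV r"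
    using has_pm_subset_hV[OF l] has_pm_subset_hV[OF r] .
  have "disjnt A B"
    using A B D hTS_subset_hV[of l] hTS_subset_hV[of r] unfolding disjnt_def by blast
  then have AB: "has_pm ?v (A \<union> B)"
    using A B \<open>card A = card B\<close> by (intro has_pm_Attach_cross) auto
  have "disjnt Wl Wr" "disjnt (Wl \<union> Wr) (A \<union> B)"
    using W A B D hTS_subset_hV[of l] hTS_subset_hV[of r] unfolding disjnt_def by blast+
  then have "has_pm ?v (Wl \<union> Wr)"
    using has_pm_Un[OF has_pm_mono[OF hE_children_subset(1) l] has_pm_mono[OF hE_children_subset(2) r]]
    by blast
  then show ?thesis
    using has_pm_Un AB \<open>disjnt (Wl \<union> Wr) (A \<union> B)\<close> by blast
qed

lemma has_pm_Attach_split: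
  assumes D: "hV l \<inter> hV r = {}" and "has_pm (Node Attach l r) W"
  obtains Z Y where "Z \<subseteq> W \<inter> hTS l" "Y \<subseteq> W \<inter> hTS r" "card Z = card Y"
    "has_pm l (W \<inter> hV l - Z)" "has_pm r (W \<inter> hV r - Y)"
proof -
  obtain M where M: "perfect_matching (hE (Node Attach l r)) M W"
    using assms(2) has_pm_iff_perfect_matching by blast
  define Ml where "Ml = M \<inter> hE l"
  define Mr where "Mr = M \<inter> hE r"
  define Mc where "Mc = M \<inter> cross_edges l r"
  define Z where "Z = \<Union>Mc \<inter> hV l"
  define Y where "Y = \<Union>Mc \<inter> hV r"
  have disj: "pairwise disjnt M" and W: "W = \<Union>Ml \<union> \<Union>Mr \<union> \<Union>Mc"
    using M unfolding perfect_matching_def hE_Attach Ml_def Mr_def Mc_def by auto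
  have sub: "Ml \<subseteq> M" "Mr \<subseteq> M" "Mc \<subseteq> M"
    unfolding Ml_def Mr_def Mc_def by auto
  have "Ml \<inter> Mc = {}" "Mr \<inter> Mc = {}"
    using cross_edges_Int_hE[OF D] unfolding Ml_def Mr_def Mc_def by blast+
  then have "\<Union>Ml \<inter> \<Union>Mc = {}" "\<Union>Mr \<inter> \<Union>Mc = {}"
    using pairwise_disjnt_Union_Int[OF disj sub(1,3)] pairwise_disjnt_Union_Int[OF disj sub(2,3)] by blast+
  moreover have "\<Union>Ml \<subseteq> hV l" "\<Union>Mr \<subseteq> hV r"
    using hE_subset_Pow_hV[of l] hE_subset_Pow_hV[of r] unfolding Ml_def Mr_def by blast+
  ultimately have "W \<inter> hV l - Z = \<Union>Ml" "W \<inter> hV r - Y = \<Union>Mr"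
    unfolding W Z_def Y_def using D by auto
  moreover have "perfect_matching (hE l) Ml (\<Union>Ml)" "perfect_matching (hE r) Mr (\<Union>Mr)"
    unfolding perfect_matching_def using pairwise_subset[OF disj] sub by (auto simp: Ml_def Mr_def)
  then have "has_pm l (\<Union>Ml)" "has_pm r (\<Union>Mr)"
    unfolding has_pm_iff_perfect_matching by blast+
  moreover have Mc: "e \<in> cross_edges l r" if "e \<in> Mc" for e
    using that unfolding Mc_def by blast
  have "finite M"
    using M hE_subset_Pow_hV finite_hV unfolding perfect_matching_def by (meson finite_Pow_iff finite_subset)
  then have "card Z = card Mc" "card Y = card Mc"
    unfolding Z_def Y_def using cross_edge_Int_hV[OF D Mc] sub(3)
    by (intro card_Union_Int_eq_card pairwise_subset[OF disj] finite_subset[OF sub(3)]; blast)+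
  moreover have "Z \<subseteq> W \<inter> hTS l" "Y \<subseteq> W \<inter> hTS r"
    using cross_edge_Int_hV[OF D Mc] unfolding W Z_def Y_def by blast+
  ultimately show thesis
    using that by simp
qed

section \<open>Feasible sets\<close>

lemma hgamma_le_card: "k_feasible u k S \<Longrightarrow> hgamma k u \<le> enat (card S)"
  unfolding hgamma_def by (rule INF_lower) simp

lemma hgamma_attained:
  assumes "hgamma k u \<noteq> \<infinity>"
  obtains S where "k_feasible u k S" "hgamma k u = enat (card S)"
proof -
  have "{S. k_feasible u k S} \<noteq> {}"
  proof
    assume empty: "{S. k_feasible u k S} = {}"
    have "hgamma k u = \<infinity>"
      unfolding hgamma_def empty by (simp add: top_enat_def)
    with assms show False by simp
  qed
  then have "hgamma k u \<in> (\<lambda>S. enat (card S)) ` {S. k_feasible u k S}"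
    unfolding hgamma_def by (blast intro: wellorder_InfI)
  then show thesis using that by blast
qed

lemma k_feasible_le_card_hTS: "k_feasible u k S \<Longrightarrow> k \<le> card (hTS u)"
  unfolding k_feasible_def by (metis card_mono finite_hTS le_infE)

lemma k_feasible_finite: "k_feasible u k S \<Longrightarrow> finite S"
  unfolding k_feasible_def using finite_hV finite_subset by blast

(* Unlike k-feasibility, this stronger condition (S - X rather than S dominates the non-twins, and
   S contains all twins) is preserved by all three operations; it yields a feasible set at every node. *)
definition covering_solution :: "'a dtree \<Rightarrow> 'a set \<Rightarrow> 'a set \<Rightarrow> bool" where
  "covering_solution u S X \<longleftrightarrow> X \<subseteq> hTS u \<and> hTS u \<subseteq> S \<and> S \<subseteq> hV u
     \<and> hV u - hTS u \<subseteq> cnbhd u (S - X) \<and> has_pm u (S - X)"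

lemma covering_solution_k_feasible:
  assumes "covering_solution u S X"
  shows "k_feasible u (card X) S"
proof -
  have "cnbhd u (S - X) \<subseteq> cnbhd u S"
    by (rule cnbhd_mono) auto
  moreover have "X \<subseteq> S \<inter> hTS u"
    using assms unfolding covering_solution_def by blast
  ultimately show ?thesis
    using assms unfolding covering_solution_def k_feasible_def by (auto intro!: exI[of _ X])
qed

lemma covering_solution_twin:
  assumes l: "covering_solution l Sl Xl" and r: "covering_solution r Sr Xr"
    and D: "hV l \<inter> hV r = {}" and c: "c \<noteq> Attach"
  shows "covering_solution (Node c l r) (Sl \<union> Sr) (Xl \<union> Xr)"
proof -
  let ?v = "Node c l r"
  have TS: "hTS ?v = hTS l \<union> hTS r"
    using c by (cases c) auto
  have split: "Sl \<union> Sr - (Xl \<union> Xr) = (Sl - Xl) \<union> (Sr - Xr)"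
    using l r D unfolding covering_solution_def by blast
  have "cnbhd l (Sl - Xl) \<subseteq> cnbhd ?v (Sl \<union> Sr - (Xl \<union> Xr))"
       "cnbhd r (Sr - Xr) \<subseteq> cnbhd ?v (Sl \<union> Sr - (Xl \<union> Xr))"
    unfolding split by (intro cnbhd_mono hE_children_subset; auto)+
  moreover have "has_pm ?v (Sl \<union> Sr - (Xl \<union> Xr))"
  proof -
    have "has_pm ?v (Sl - Xl)" "has_pm ?v (Sr - Xr)"
      using l r has_pm_mono[OF hE_children_subset(1)] has_pm_mono[OF hE_children_subset(2)]
      unfolding covering_solution_def by blast+
    moreover have "disjnt (Sl - Xl) (Sr - Xr)"
      using l r D unfolding covering_solution_def disjnt_def by blast
    ultimately show ?thesis
      unfolding split by (rule has_pm_Un)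
  qed
  ultimately show ?thesis
    using l r TS unfolding covering_solution_def by auto
qed

lemma covering_solution_Attach:
  assumes l: "covering_solution l Sl Xl" and r: "covering_solution r Sr Xr"
    and D: "hV l \<inter> hV r = {}"
  obtains S X where "covering_solution (Node Attach l r) S X"
proof -
  let ?v = "Node Attach l r"
  have Xl: "Xl \<subseteq> hTS l" "hTS l \<subseteq> Sl" "Sl \<subseteq> hV l"
    and Xr: "Xr \<subseteq> hTS r" "hTS r \<subseteq> Sr" "Sr \<subseteq> hV r"
    using l r unfolding covering_solution_def by auto
  obtain Al Ar where A: "Al \<subseteq> Xl" "Ar \<subseteq> Xr" "card Al = card Ar" "Al = Xl \<or> Ar = Xr"
    using obtain_subsets_same_card Xl(1) Xr(1) finite_hTS finite_subset by metis
  define S where "S = Sl \<union> (Sr - (Xr - Ar))"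
  define X where "X = Xl - Al"
  have split: "S - X = (Sl - Xl) \<union> (Sr - Xr) \<union> (Al \<union> Ar)"
    unfolding S_def X_def using A Xl Xr D by blast
  have pm: "has_pm ?v (S - X)"
    unfolding split using l r A Xl Xr
    by (intro has_pm_Attach[OF D]) (auto simp: covering_solution_def)
  have "hTS r \<subseteq> cnbhd ?v (S - X)"
  proof (cases "Al = Xl")
    case True
    obtain t where t: "t \<in> hTS l"
      using hTS_nonempty[of l] by blast
    moreover have "t \<in> S - X"
      using t True Xl unfolding S_def X_def by blast
    ultimately show ?thesis
      by (rule hTS_right_subset_cnbhd_Attach)
  next
    case False
    then have "hTS r \<subseteq> S"
      using A(4) Xr(2) unfolding S_def by blast
    moreover have "X \<inter> hTS r = {}"
      using Xl D hTS_subset_hV[of r] unfolding X_def by blast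
    ultimately show ?thesis
      using subset_cnbhd[of "S - X" ?v] by blast
  qed
  moreover have "hV l - hTS l \<subseteq> cnbhd l (Sl - Xl)" "hV r - hTS r \<subseteq> cnbhd r (Sr - Xr)"
    using l r unfolding covering_solution_def by auto
  ultimately have "hV ?v - hTS ?v \<subseteq> cnbhd ?v (S - X)"
    by (rule non_twins_Attach_subset_cnbhd) (auto simp: split)
  moreover have "X \<subseteq> hTS ?v" "hTS ?v \<subseteq> S" "S \<subseteq> hV ?v"
    using Xl Xr unfolding S_def X_def by auto
  ultimately have "covering_solution ?v S X"
    using pm unfolding covering_solution_def by blast
  then show thesis by (rule that)
qed

lemma covering_solution_exists: "wf_dtree u \<Longrightarrow> \<exists>S X. covering_solution u S X"
proof (induction u)
  case (Leaf x)
  have "covering_solution (Leaf x) {x} {x}"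
    unfolding covering_solution_def using has_pm_empty by auto
  then show ?case by blast
next
  case (Node c l r)
  then obtain Sl Xl Sr Xr where "covering_solution l Sl Xl" "covering_solution r Sr Xr"
    and "hV l \<inter> hV r = {}"
    by auto
  then show ?case
    using covering_solution_twin covering_solution_Attach by (cases "c = Attach") blast+
qed

lemma hmin_le_hgamma: "k \<le> card (hTS u) \<Longrightarrow> hmin u \<le> hgamma k u"
  unfolding hmin_def by (rule Min_le) auto

lemma hmin_attained: "\<exists>k \<le> card (hTS u). hgamma k u = hmin u"
proof -
  have "hmin u \<in> (\<lambda>k. hgamma k u) ` {0..card (hTS u)}"
    unfolding hmin_def by (rule Min_in) auto
  then show ?thesis by auto
qed

lemma hmin_finite:
  assumes "wf_dtree u"
  shows "hmin u \<noteq> \<infinity>"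
proof -
  obtain S X where "covering_solution u S X"
    using covering_solution_exists[OF assms] by blast
  then have feasible: "k_feasible u (card X) S"
    by (rule covering_solution_k_feasible)
  have "hmin u \<le> hgamma (card X) u"
    using k_feasible_le_card_hTS[OF feasible] by (rule hmin_le_hgamma)
  also have "\<dots> \<le> enat (card S)"
    using feasible by (rule hgamma_le_card)
  finally show ?thesis
    by (cases "hmin u") auto
qed

lemma hbeta_eq_0_if_hgamma_0_less:
  assumes less: "\<And>k. 0 < k \<Longrightarrow> k \<le> card (hTS u) \<Longrightarrow> hgamma 0 u < hgamma k u"
  shows "hbeta u = 0"
proof -
  obtain k0 where k0: "k0 \<le> card (hTS u)" "hgamma k0 u = hmin u"
    using hmin_attained by blast
  have "hmin u \<le> hgamma 0 u"
    by (rule hmin_le_hgamma) simp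
  then have hmin: "hmin u = hgamma 0 u"
    using less[of k0] k0 by (cases "k0 = 0") auto
  have "{k. k \<le> card (hTS u) \<and> hgamma k u = hmin u} = {0}"
  proof (intro equalityI subsetI)
    fix k assume "k \<in> {k. k \<le> card (hTS u) \<and> hgamma k u = hmin u}"
    then show "k \<in> {0}"
      using less[of k] hmin by (cases "k = 0") auto
  qed (simp add: hmin)
  then show ?thesis
    unfolding hbeta_def by simp
qed

lemma halpha_le_card: "halpha u \<le> card (hTS u)"
proof -
  have "halpha u \<in> {k. k \<le> card (hTS u) \<and> hgamma k u = hmin u}"
    unfolding halpha_def using hmin_attained[of u] by (intro Min_in) auto
  then show ?thesis by simp
qed

lemma prop_P_cases:
  assumes "prop_P u" "k \<le> card (hTS u)"
  shows "hgamma k u = hmin u + enat (halpha u - k) \<or> hgamma k u = hmin u + enat (k - hbeta u)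
    \<or> hgamma k u = hmin u \<or> hgamma k u = hmin u + 1"
  using assms unfolding prop_P_def by meson

lemma prop_P_hgamma_finite:
  assumes "prop_P u" "hmin u \<noteq> \<infinity>" "k \<le> card (hTS u)"
  shows "hgamma k u \<noteq> \<infinity>"
  using prop_P_cases[OF assms(1,3)] assms(2) by (auto simp: one_enat_def)

lemma prop_P_above_hbeta:
  "prop_P u \<Longrightarrow> hbeta u \<le> k \<Longrightarrow> k \<le> card (hTS u) \<Longrightarrow> hgamma k u = hmin u + enat (k - hbeta u)"
  unfolding prop_P_def by blast

lemma prop_P_below_halpha:
  assumes "prop_P u" "k \<le> halpha u"
  shows "hgamma k u = hmin u + enat (halpha u - k)"
proof -
  have "k \<le> card (hTS u)"
    using assms(2) halpha_le_card[of u] by (rule le_trans)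
  then show ?thesis
    using assms unfolding prop_P_def by blast
qed

lemma prop_P_nat_profile:
  assumes "wf_dtree u" "prop_P u"
  obtains f F where "\<And>j. j \<le> card (hTS u) \<Longrightarrow> hgamma j u = enat (f j)"
    "\<And>j. hbeta u \<le> j \<Longrightarrow> j \<le> card (hTS u) \<Longrightarrow> f j = F + (j - hbeta u)"
    "\<And>j. j \<le> halpha u \<Longrightarrow> f j = F + (halpha u - j)"
proof -
  obtain F where F: "hmin u = enat F"
    using hmin_finite[OF assms(1)] by blast
  define f where "f j = the_enat (hgamma j u)" for j
  show thesis
  proof (rule that)
    show f: "hgamma j u = enat (f j)" if "j \<le> card (hTS u)" for j
      using prop_P_hgamma_finite[OF assms(2) hmin_finite[OF assms(1)] that] unfolding f_def by auto
    show "f j = F + (j - hbeta u)" if "hbeta u \<le> j" "j \<le> card (hTS u)" for j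
      using prop_P_above_hbeta[OF assms(2) that] f[OF that(2)] F by simp
    show "f j = F + (halpha u - j)" if "j \<le> halpha u" for j
      using prop_P_below_halpha[OF assms(2) that] f[OF order_trans[OF that halpha_le_card]] F by simp
  qed
qed

section \<open>Attachment nodes\<close>

lemma k_feasible_Attach_merge:
  assumes D: "hV l \<inter> hV r = {}" and l: "k_feasible l m Sl" and r: "k_feasible r m Sr"
    and "0 < m"
  shows "k_feasible (Node Attach l r) 0 (Sl \<union> Sr)"
proof -
  let ?v = "Node Attach l r"
  obtain Xl where Xl: "Xl \<subseteq> Sl \<inter> hTS l" "card Xl = m" "has_pm l (Sl - Xl)"
    using l unfolding k_feasible_def by blast
  obtain Xr where Xr: "Xr \<subseteq> Sr \<inter> hTS r" "card Xr = m" "has_pm r (Sr - Xr)"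
    using r unfolding k_feasible_def by blast
  have split: "Sl \<union> Sr = (Sl - Xl) \<union> (Sr - Xr) \<union> (Xl \<union> Xr)"
    using Xl Xr by blast
  have pm: "has_pm ?v (Sl \<union> Sr)"
    unfolding split using Xl Xr by (intro has_pm_Attach[OF D]) auto
  obtain t where "t \<in> Xl"
    using Xl(2) \<open>0 < m\<close> by fastforce
  then have "hTS r \<subseteq> cnbhd ?v (Sl \<union> Sr)"
    using Xl(1) by (intro hTS_right_subset_cnbhd_Attach) auto
  moreover have "hV l - hTS l \<subseteq> cnbhd l Sl" "hV r - hTS r \<subseteq> cnbhd r Sr"
    using l r unfolding k_feasible_def by auto
  ultimately have dom: "hV ?v - hTS ?v \<subseteq> cnbhd ?v (Sl \<union> Sr)"
    by (rule non_twins_Attach_subset_cnbhd) auto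
  have "Sl \<union> Sr \<subseteq> hV ?v"
    using l r unfolding k_feasible_def by auto
  then show ?thesis
    unfolding k_feasible_def using dom pm by (intro conjI exI[of _ "{}"]) simp_all
qed

lemma k_feasible_Attach_split:
  assumes D: "hV l \<inter> hV r = {}" and S: "k_feasible (Node Attach l r) k S"
  obtains m where "k_feasible l (k + m) (S \<inter> hV l)" "k_feasible r m (S \<inter> hV r)"
proof -
  let ?v = "Node Attach l r"
  obtain X where X: "X \<subseteq> S \<inter> hTS l" "card X = k" and pm: "has_pm ?v (S - X)"
    using S unfolding k_feasible_def by auto
  obtain Z Y where Z: "Z \<subseteq> (S - X) \<inter> hTS l" and Y: "Y \<subseteq> (S - X) \<inter> hTS r" and "card Z = card Y"
    and pml: "has_pm l ((S - X) \<inter> hV l - Z)" and pmr: "has_pm r ((S - X) \<inter> hV r - Y)"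
    using has_pm_Attach_split[OF D pm] by blast
  have TS: "hTS l \<subseteq> hV l" "hTS r \<subseteq> hV r"
    by (rule hTS_subset_hV)+
  have dom_l: "hV l - hTS l \<subseteq> cnbhd l (S \<inter> hV l)" and dom_r: "hV r - hTS r \<subseteq> cnbhd r (S \<inter> hV r)"
    using non_twins_children_subset_cnbhd[OF D] S unfolding k_feasible_def by blast+
  have "S \<inter> hV l - (X \<union> Z) = (S - X) \<inter> hV l - Z" "S \<inter> hV r - Y = (S - X) \<inter> hV r - Y"
    using X TS D by auto
  then have pm_l: "has_pm l (S \<inter> hV l - (X \<union> Z))" and pm_r: "has_pm r (S \<inter> hV r - Y)"
    using pml pmr by simp_all
  have "card (X \<union> Z) = k + card Y"
    using X Z \<open>card Z = card Y\<close> finite_hTS[of l]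
    by (subst card_Un_disjoint) (auto intro: finite_subset)
  then have "k_feasible l (k + card Y) (S \<inter> hV l)"
    unfolding k_feasible_def by (intro conjI exI[of _ "X \<union> Z"]) (use dom_l pm_l X Z TS in auto)
  moreover have "k_feasible r (card Y) (S \<inter> hV r)"
    unfolding k_feasible_def by (intro conjI exI[of _ Y]) (use dom_r pm_r Y TS in auto)
  ultimately show thesis
    by (rule that)
qed

lemma hgamma_0_Attach_le:
  assumes D: "hV l \<inter> hV r = {}" and "0 < m"
  shows "hgamma 0 (Node Attach l r) \<le> hgamma m l + hgamma m r"
proof (cases "hgamma m l = \<infinity> \<or> hgamma m r = \<infinity>")
  case True
  then show ?thesis by auto
next
  case False
  then obtain Sl Sr where l: "k_feasible l m Sl" "hgamma m l = enat (card Sl)"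
    and r: "k_feasible r m Sr" "hgamma m r = enat (card Sr)"
    using hgamma_attained by metis
  have "Sl \<inter> Sr = {}"
    using l(1) r(1) D unfolding k_feasible_def by blast
  then have "card (Sl \<union> Sr) = card Sl + card Sr"
    using k_feasible_finite[OF l(1)] k_feasible_finite[OF r(1)] by (rule card_Un_disjoint[rotated 2])
  then show ?thesis
    using hgamma_le_card[OF k_feasible_Attach_merge[OF D l(1) r(1) \<open>0 < m\<close>]] l(2) r(2) by simp
qed

lemma hgamma_Attach_split:
  assumes D: "hV l \<inter> hV r = {}" and S: "k_feasible (Node Attach l r) k S"
  obtains m where "k + m \<le> card (hTS l)" "m \<le> card (hTS r)"
    "hgamma (k + m) l + hgamma m r \<le> enat (card S)"
proof -
  obtain m where l: "k_feasible l (k + m) (S \<inter> hV l)" and r: "k_feasible r m (S \<inter> hV r)"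
    using k_feasible_Attach_split[OF assms] .
  have S_split: "(S \<inter> hV l) \<union> (S \<inter> hV r) = S"
    using S unfolding k_feasible_def by auto
  have "card ((S \<inter> hV l) \<union> (S \<inter> hV r)) = card (S \<inter> hV l) + card (S \<inter> hV r)"
    using D k_feasible_finite[OF S] by (intro card_Un_disjoint) auto
  then have "card S = card (S \<inter> hV l) + card (S \<inter> hV r)"
    by (simp only: S_split)
  then have "hgamma (k + m) l + hgamma m r \<le> enat (card S)"
    using add_mono[OF hgamma_le_card[OF l] hgamma_le_card[OF r]] by simp
  then show thesis
    using that k_feasible_le_card_hTS[OF l] k_feasible_le_card_hTS[OF r] by blast
qed

lemma exists_cheaper_balanced_index:
  fixes f g :: "nat \<Rightarrow> nat"
  assumes "b < a" "a \<le> cr" "k + m \<le> cl" "m \<le> cr" "0 < k"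
    and f_above: "\<And>j. b \<le> j \<Longrightarrow> j \<le> cl \<Longrightarrow> f j = F + (j - b)"
    and g_below: "\<And>j. j \<le> a \<Longrightarrow> g j = G + (a - j)"
  obtains j where "0 < j" "j \<le> cl" "j \<le> cr" "f j + g j < f (k + m) + g m"
proof (cases "a \<le> m")
  case True
  then have "f m < f (k + m)"
    using assms f_above[of m] f_above[of "k + m"] by simp
  then show ?thesis
    using that[of m] True assms by simp
next
  case m_below: False
  show ?thesis
  proof (cases "k + m \<le> a")
    case True
    then have "g (k + m) < g m"
      using assms g_below[of m] g_below[of "k + m"] by simp
    then show ?thesis
      using that[of "k + m"] True assms by simp
  next
    case False
    then have "f a + g a < f (k + m) + g m"
      using assms m_below f_above[of a] f_above[of "k + m"] g_below[of a] g_below[of m] by simp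
    then show ?thesis
      using that[of a] False assms by simp
  qed
qed

lemma hgamma_0_less_Attach:
  assumes wf: "wf_dtree (Node Attach l r)" and Pl: "prop_P l" and Pr: "prop_P r"
    and gap: "hbeta l < halpha r" and k: "0 < k" "k \<le> card (hTS l)"
  shows "hgamma 0 (Node Attach l r) < hgamma k (Node Attach l r)"
proof -
  let ?v = "Node Attach l r"
  have D: "hV l \<inter> hV r = {}" and wf_l: "wf_dtree l" and wf_r: "wf_dtree r"
    using wf by simp_all
  obtain f F where f: "\<And>j. j \<le> card (hTS l) \<Longrightarrow> hgamma j l = enat (f j)"
    and f_above: "\<And>j. hbeta l \<le> j \<Longrightarrow> j \<le> card (hTS l) \<Longrightarrow> f j = F + (j - hbeta l)"
    using prop_P_nat_profile[OF wf_l Pl] by metis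
  obtain g G where g: "\<And>j. j \<le> card (hTS r) \<Longrightarrow> hgamma j r = enat (g j)"
    and g_below: "\<And>j. j \<le> halpha r \<Longrightarrow> g j = G + (halpha r - j)"
    using prop_P_nat_profile[OF wf_r Pr] by metis
  have merge: "hgamma 0 ?v \<le> enat (f j + g j)" if "0 < j" "j \<le> card (hTS l)" "j \<le> card (hTS r)" for j
    using hgamma_0_Attach_le[OF D that(1)] f[OF that(2)] g[OF that(3)] by simp
  show ?thesis
  proof (cases "hgamma k ?v = \<infinity>")
    case True
    have "hgamma 0 ?v \<le> enat (f 1 + g 1)"
      using merge card_hTS_pos[of l] card_hTS_pos[of r] by simp
    also have "\<dots> < \<infinity>"
      by simp
    finally show ?thesis
      using True by simp
  next
    case False
    then obtain S where S: "k_feasible ?v k S" "hgamma k ?v = enat (card S)"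
      by (rule hgamma_attained)
    obtain m where m: "k + m \<le> card (hTS l)" "m \<le> card (hTS r)"
      "hgamma (k + m) l + hgamma m r \<le> enat (card S)"
      using hgamma_Attach_split[OF D S(1)] by blast
    obtain j where j: "0 < j" "j \<le> card (hTS l)" "j \<le> card (hTS r)" "f j + g j < f (k + m) + g m"
      using exists_cheaper_balanced_index[OF gap halpha_le_card m(1,2) k(1) f_above g_below] by blast
    have "hgamma 0 ?v \<le> enat (f j + g j)"
      using merge j(1-3) by blast
    also have "\<dots> < enat (f (k + m) + g m)"
      using j(4) by simp
    also have "\<dots> \<le> hgamma k ?v"
      using m(3) f[OF m(1)] g[OF m(2)] S(2) by simp
    finally show ?thesis .
  qed
qed

theorem lemma40:
  fixes T vl vr :: "'a dtree" and V :: "'a set" and E :: "'a set set"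
  assumes "distance_hereditary V E"
    and "decomp_tree T V E"
    and "Node Attach vl vr \<in> subtrees T"
    and "prop_P vl" and "prop_P vr"
    and "halpha vr > hbeta vl"
  shows "hbeta (Node Attach vl vr) = 0"
proof (rule hbeta_eq_0_if_hgamma_0_less)
  have wf: "wf_dtree (Node Attach vl vr)"
    using assms(2,3) wf_dtree_subtree unfolding decomp_tree_def by blast
  fix k assume "0 < k" "k \<le> card (hTS (Node Attach vl vr))"
  then show "hgamma 0 (Node Attach vl vr) < hgamma k (Node Attach vl vr)"
    using hgamma_0_less_Attach[OF wf assms(4-6)] by simp
qed

end
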